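(* Assume (H1)–(H3), $\kappa>\tilde\kappa$, and fix $\tilde\xi$ as below. There is a constant $C>0$ (depending only on $f,h,\kappa,r_0,\tilde\xi$) such that for every $u\in\mathcal X(\mathbb R)$ with $|u|^2\le r_0^2+\tilde\xi$ on $\mathbb R$: $$|u'|^2+F(|u|^2)+\tfrac\kappa2\big((h(|u|^2))'\big)^2\ge C^{-1}\big(|u'|^2+(|u|^2-r_0^2)^2\big)\quad\text{a.e. on }\mathbb R;$$ moreover $\||u|^2-r_0^2\|_{H^1(\mathbb R)}^2\le CE_\kappa(u)$, and if $\mu=\inf_{\mathbb R}|u|>0$ then $|P(u)|\le C\mu^{-1}E_\kappa(u)$.
   Context: $r_0>0$, $f,h\in C^\infty([0,\infty);\mathbb R)$ (H1), $f(r_0^2)=0$, $F(\sigma)=\int_\sigma^{r_0^2}f(w)dw$. (H2): $1+2\kappa\sigma h'(\sigma)^2>0$ for $\sigma\in[0,r_0^2]$; (H3): $F>0$ on $[0,r_0^2)$, $F''(r_0^2)>0$. $\tilde\kappa=\sup_{\sigma\in(0,r_0^2]}(-1/(2\sigma h'(\sigma)^2))$. $\tilde\xi>0$ is fixed such that $F(\sigma)>0$ and $1+2\kappa\sigma h'(\sigma)^2>0$ for all $\sigma\in(r_0^2,r_0^2+\tilde\xi]$. $\mathcal X(\mathbb R)=\{v\in H^1_{loc}(\mathbb R;\mathbb C):v'\in L^2,|v|^2-r_0^2\in L^2\}$. $E_\kappa(v)=\int(|v'|^2+F(|v|^2)+\frac\kappa2|(h(|v|^2))'|^2)dx$. $P(v)=\int\mathrm{Re}(iv'\bar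 v)(1-r_0^2/|v|^2)dx$ for $\inf|v|>0$. *)

theory Defs
  imports "HOL-Analysis.Analysis"
begin

definition smooth_on_nonneg :: "(real \<Rightarrow> real) \<Rightarrow> bool" where
  "smooth_on_nonneg g \<longleftrightarrow> (\<exists>D :: nat \<Rightarrow> real \<Rightarrow> real. D 0 = g \<and>
      (\<forall>n. \<forall>x\<ge>0. (D n has_real_derivative D (Suc n) x) (at x within {0..})))"

definition Fpot :: "(real \<Rightarrow> real) \<Rightarrow> real \<Rightarrow> real \<Rightarrow> real" where
  "Fpot f r0 \<sigma> = (LBINT w=ereal \<sigma>..ereal (r0\<^sup>2). f w)"

definition kappa_tilde :: "(real \<Rightarrow> real) \<Rightarrow> real \<Rightarrow> ereal" where
  "kappa_tilde h r0 = (SUP \<sigma>\<in>{0<..r0\<^sup>2}.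
      (if deriv h \<sigma> = 0 then - \<infinity> else ereal (- 1 / (2 * \<sigma> * (deriv h \<sigma>)\<^sup>2))))"

text \<open>Weak derivative on the real line, for the continuous (locally absolutely continuous)
  representative: g' locally integrable and g(x) = g(0) + int_0^x g'.\<close>
definition has_weak_deriv :: "(real \<Rightarrow> 'a::{banach,second_countable_topology}) \<Rightarrow> (real \<Rightarrow> 'a) \<Rightarrow> bool" where
  "has_weak_deriv g g' \<longleftrightarrow>
     (\<forall>a b. set_integrable lborel {a..b} g') \<and>
     (\<forall>x. g x = g 0 + (LBINT t=ereal 0..ereal x. g' t))"

definition wderiv :: "(real \<Rightarrow> 'a::{banach,second_countable_topology}) \<Rightarrow> real \<Rightarrow> 'a" where
  "wderiv g = (SOME g'. has_weak_deriv g g')"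

definition X_space :: "real \<Rightarrow> (real \<Rightarrow> complex) set" where
  "X_space r0 = {v. (\<exists>v'. has_weak_deriv v v') \<and>
      integrable lborel (\<lambda>x. (cmod (wderiv v x))\<^sup>2) \<and>
      integrable lborel (\<lambda>x. ((cmod (v x))\<^sup>2 - r0\<^sup>2)\<^sup>2)}"

definition energy_density ::
  "(real \<Rightarrow> real) \<Rightarrow> (real \<Rightarrow> real) \<Rightarrow> real \<Rightarrow> real \<Rightarrow> (real \<Rightarrow> complex) \<Rightarrow> real \<Rightarrow> real" where
  "energy_density f h \<kappa> r0 v x =
     (cmod (wderiv v x))\<^sup>2 + Fpot f r0 ((cmod (v x))\<^sup>2)
     + \<kappa> / 2 * (wderiv (\<lambda>y. h ((cmod (v y))\<^sup>2)) x)\<^sup>2"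

definition E_kappa ::
  "(real \<Rightarrow> real) \<Rightarrow> (real \<Rightarrow> real) \<Rightarrow> real \<Rightarrow> real \<Rightarrow> (real \<Rightarrow> complex) \<Rightarrow> real" where
  "E_kappa f h \<kappa> r0 v = (\<integral>x. energy_density f h \<kappa> r0 v x \<partial>lborel)"

definition H1_norm_sq :: "(real \<Rightarrow> real) \<Rightarrow> real" where
  "H1_norm_sq q = (\<integral>x. (q x)\<^sup>2 \<partial>lborel) + (\<integral>x. (wderiv q x)\<^sup>2 \<partial>lborel)"

definition momentum :: "real \<Rightarrow> (real \<Rightarrow> complex) \<Rightarrow> real" where
  "momentum r0 v = (\<integral>x. Re (\<i> * wderiv v x * cnj (v x)) * (1 - r0\<^sup>2 / (cmod (v x))\<^sup>2) \<partial>lborel)"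

end

(*
  On the admissible range 0 <= |u|^2 <= r0^2 + xi the potential F(sigma) is comparable to
  (sigma - r0^2)^2: it is positive away from r0^2, vanishes to second order there with
  F''(r0^2) = -f'(r0^2) > 0, and the range is compact. The chain rule gives
  (h(|u|^2))' = h'(|u|^2) (|u|^2)' with ((|u|^2)')^2 <= 4 |u|^2 |u'|^2, so a negative kappa
  lowers the kinetic term |u'|^2 at most by the factor 1 + 2 kappa sigma h'(sigma)^2, which
  stays bounded away from 0 on the range. Hence the energy density is pointwise comparable to
  |u'|^2 + (|u|^2 - r0^2)^2. Integrating gives the H^1 bound, again via
  ((|u|^2)')^2 <= 4 |u|^2 |u'|^2, and the momentum bound, since the momentum density is at most
  |u'| ||u|^2 - r0^2| / |u| <= (|u'|^2 + (|u|^2 - r0^2)^2) / mu.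
*)

theory Submission
  imports Defs
begin

section \<open>Weak derivatives on the real line\<close>

lemma interval_lebesgue_integrable_if_locally:
  fixes g :: "real \<Rightarrow> 'a::{banach,second_countable_topology}"
  assumes "\<forall>a b. set_integrable lborel {a..b} g"
  shows "interval_lebesgue_integrable lborel (ereal x) (ereal y) g"
proof -
  have "set_integrable lborel {min x y<..<max x y} g"
    by (rule set_integrable_subset[of lborel "{min x y..max x y}"]) (use assms in auto)
  then show ?thesis
    by (cases "x \<le> y") (simp_all add: interval_lebesgue_integrable_def min_def max_def)
qed

lemma locally_integrable_borel_measurable:
  fixes g :: "real \<Rightarrow> 'a::{banach,second_countable_topology}"
  assumes "\<forall>a b. set_integrable lborel {a..b} g"
  shows "g \<in> borel_measurable lborel"
proof (rule borel_measurable_LIMSEQ_metric)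
  fix n :: nat
  show "(\<lambda>x. indicator {- real n..real n} x *\<^sub>R g x) \<in> borel_measurable lborel"
    using assms unfolding set_integrable_def by (metis borel_measurable_integrable)
next
  fix x :: real
  obtain N :: nat where "\<bar>x\<bar> \<le> N" using real_arch_simple by blast
  then have "eventually (\<lambda>n. indicator {- real n..real n} x *\<^sub>R g x = g x) sequentially"
    unfolding eventually_sequentially by (intro exI[of _ N]) (auto simp: indicator_def)
  then show "(\<lambda>n. indicator {- real n..real n} x *\<^sub>R g x) \<longlonglongrightarrow> g x"
    by (rule tendsto_eventually)
qed

lemma has_weak_deriv_locally_integrable:
  "has_weak_deriv g g' \<Longrightarrow> \<forall>a b. set_integrable lborel {a..b} g'"
  unfolding has_weak_deriv_def by (rule conjunct1)

lemma has_weak_deriv_FTC: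
  fixes g g' :: "real \<Rightarrow> 'a::{banach,second_countable_topology}"
  assumes "has_weak_deriv g g'"
  shows "g b - g a = (LBINT t=ereal a..ereal b. g' t)"
proof -
  have I: "\<forall>a b. set_integrable lborel {a..b} g'" and
    E: "\<And>x. g x = g 0 + (LBINT t=ereal 0..ereal x. g' t)"
    using assms unfolding has_weak_deriv_def by blast+
  have "(LBINT t=ereal 0..ereal b. g' t) = (LBINT t=ereal 0..ereal a. g' t) + (LBINT t=ereal a..ereal b. g' t)"
    using interval_lebesgue_integrable_if_locally[OF I, of "min 0 (min a b)" "max 0 (max a b)"]
    by (intro interval_integral_sum[symmetric]) (simp only: ereal_min ereal_max)
  then show ?thesis by (simp add: E[of a] E[of b])
qed

lemma has_weak_derivI:
  fixes g g' :: "real \<Rightarrow> 'a::{banach,second_countable_topology}"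
  assumes "\<forall>a b. set_integrable lborel {a..b} g'"
    and "\<And>a b. a \<le> b \<Longrightarrow> g b - g a = (LBINT t=ereal a..ereal b. g' t)"
  shows "has_weak_deriv g g'"
  unfolding has_weak_deriv_def
proof (intro conjI allI)
  fix x
  show "g x = g 0 + (LBINT t=ereal 0..ereal x. g' t)"
  proof (cases "0 \<le> x")
    case True
    then show ?thesis using assms(2)[of 0 x] by (simp add: algebra_simps)
  next
    case False
    then have "g 0 - g x = (LBINT t=ereal x..ereal 0. g' t)" using assms(2)[of x 0] by simp
    then show ?thesis by (simp add: interval_integral_endpoints_reverse[of "ereal 0"] algebra_simps)
  qed
qed (use assms in auto)

lemma has_weak_deriv_wderiv:
  assumes "has_weak_deriv g g'"
  shows "has_weak_deriv g (wderiv g)"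
  unfolding wderiv_def by (rule someI[of "has_weak_deriv g" g', OF assms])

lemma has_weak_deriv_continuous:
  fixes g g' :: "real \<Rightarrow> 'a::euclidean_space"
  assumes "has_weak_deriv g g'"
  shows "continuous_on UNIV g"
proof -
  have I: "\<forall>a b. set_integrable lborel {a..b} g'" by (rule has_weak_deriv_locally_integrable[OF assms])
  have local_continuity: "continuous_on {x - 1..x + 1} g" for x
  proof -
    have "g' integrable_on {x - 1..x + 1}" using I set_borel_integral_eq_integral(1) by blast
    then have "continuous_on {x - 1..x + 1} (\<lambda>y. g (x - 1) + integral {x - 1..y} g')"
      by (intro continuous_intros indefinite_integral_continuous_1)
    moreover have "g (x - 1) + integral {x - 1..y} g' = g y" if "y \<in> {x - 1..x + 1}" for y
      using has_weak_deriv_FTC[OF assms, of y "x - 1"] interval_integral_eq_integral[of "x - 1" y g'] I that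
      by (simp add: algebra_simps)
    ultimately show ?thesis by (rule continuous_on_eq)
  qed
  have "isCont g x" for x
    by (rule continuous_on_interior[OF local_continuity[of x]]) (auto simp: interior_atLeastAtMost_real)
  then show ?thesis by (simp add: continuous_on_eq_continuous_at)
qed

lemma AE_zero_if_integrals_greaterThan_zero:
  fixes g :: "real \<Rightarrow> real"
  assumes g: "integrable lborel g" and Z: "\<And>x. (\<integral>y. g y * indicator {x<..} y \<partial>lborel) = 0"
  shows "AE x in lborel. g x = 0"
proof -
  have [measurable]: "g \<in> borel_measurable borel" using borel_measurable_integrable[OF g] by simp
  let ?pos = "\<lambda>s y. max 0 (s * g y)"
  have pos_integrable: "integrable lborel (\<lambda>y. ?pos s y * indicator {x<..} y)" if "\<bar>s\<bar> = 1" for s x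
    by (rule Bochner_Integration.integrable_bound[OF integrable_abs[OF g]])
      (use that in \<open>auto simp: indicator_def abs_if split: if_splits\<close>)
  have emeasure_pos: "emeasure (density lborel (\<lambda>y. ennreal (?pos s y))) {x<..}
      = ennreal (\<integral>y. ?pos s y * indicator {x<..} y \<partial>lborel)" if "\<bar>s\<bar> = 1" for s x
    by (subst emeasure_density) (auto simp: ennreal_mult'[symmetric] ennreal_indicator[symmetric]
        intro!: nn_integral_eq_integral pos_integrable[OF that])
  \<comment> \<open>The positive and negative parts of \<open>g\<close> are densities of finite measures that agree on
    every half-line, hence coincide.\<close>
  have "density lborel (\<lambda>y. ennreal (?pos 1 y)) = density lborel (\<lambda>y. ennreal (?pos (-1) y))"
  proof (rule measure_eqI_lessThan)
    fix x
    have "(\<integral>y. ?pos 1 y * indicator {x<..} y \<partial>lborel) - (\<integral>y. ?pos (-1) y * indicator {x<..} y \<partial>lborel)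
        = (\<integral>y. g y * indicator {x<..} y \<partial>lborel)"
      by (subst Bochner_Integration.integral_diff[symmetric, OF pos_integrable pos_integrable])
        (auto intro!: Bochner_Integration.integral_cong simp: max_def)
    then show "emeasure (density lborel (\<lambda>y. ennreal (?pos 1 y))) {x<..}
        = emeasure (density lborel (\<lambda>y. ennreal (?pos (-1) y))) {x<..}"
      using emeasure_pos[of 1 x] emeasure_pos[of "-1" x] Z[of x] by simp
    show "emeasure (density lborel (\<lambda>y. ennreal (?pos 1 y))) {x<..} < \<infinity>"
      using emeasure_pos[of 1 x] by simp
  qed auto
  then have "AE y in lborel. ennreal (?pos 1 y) = ennreal (?pos (-1) y)"
    by (intro sigma_finite_measure.density_unique[OF sigma_finite_lborel]) auto
  then show ?thesis by eventually_elim (auto simp: max_def split: if_splits)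
qed

lemma AE_zero_if_interval_integrals_zero:
  fixes g :: "real \<Rightarrow> real"
  assumes I: "\<forall>a b. set_integrable lborel {a..b} g"
    and Z: "\<And>a b. a \<le> b \<Longrightarrow> (LBINT t=ereal a..ereal b. g t) = 0"
  shows "AE x in lborel. g x = 0"
proof -
  have "AE x in lborel. indicator {-real n..real n} x * g x = 0" for n :: nat
  proof (rule AE_zero_if_integrals_greaterThan_zero)
    show "integrable lborel (\<lambda>x. indicator {-real n..real n} x * g x)"
      using I unfolding set_integrable_def by simp
    fix x
    have "(\<integral>y. indicator {-real n..real n} y * g y * indicator {x<..} y \<partial>lborel)
        = (LINT y:{x<..} \<inter> {-real n..real n}|lborel. g y)"
      unfolding set_lebesgue_integral_def
      by (intro Bochner_Integration.integral_cong) (auto simp: indicator_def)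
    also have "\<dots> = 0"
    proof (cases "x < - real n")
      case True
      then have "{x<..} \<inter> {-real n..real n} = {-real n..real n}" by auto
      then show ?thesis using Z[of "-real n" "real n"] interval_integral_Icc[of "-real n" "real n" g] by simp
    next
      case False
      show ?thesis
      proof (cases "x \<le> real n")
        case True
        then have "{x<..} \<inter> {-real n..real n} = {x<..real n}" using False by auto
        then show ?thesis using Z[of x "real n"] interval_integral_Ioc[of x "real n" g] True by simp
      next
        case False
        then have "{x<..} \<inter> {-real n..real n} = {}" by auto
        then show ?thesis by (simp add: set_lebesgue_integral_def)
      qed
    qed
    finally show "(\<integral>y. indicator {-real n..real n} y * g y * indicator {x<..} y \<partial>lborel) = 0" .
  qed
  then have "AE x in lborel. \<forall>n::nat. indicator {-real n..real n} x * g x = 0"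
    unfolding AE_all_countable by blast
  then show ?thesis
  proof eventually_elim
    case (elim x)
    obtain n :: nat where "\<bar>x\<bar> \<le> n" using real_arch_simple by blast
    then show ?case using elim[rule_format, of n] by (simp add: indicator_def)
  qed
qed

lemma has_weak_deriv_unique_AE:
  fixes g g\<^sub>1 g\<^sub>2 :: "real \<Rightarrow> real"
  assumes "has_weak_deriv g g\<^sub>1" "has_weak_deriv g g\<^sub>2"
  shows "AE x in lborel. g\<^sub>1 x = g\<^sub>2 x"
proof -
  have I: "\<forall>a b. set_integrable lborel {a..b} g\<^sub>1" "\<forall>a b. set_integrable lborel {a..b} g\<^sub>2"
    using assms by (simp_all add: has_weak_deriv_locally_integrable)
  have "AE x in lborel. g\<^sub>1 x - g\<^sub>2 x = 0"
  proof (rule AE_zero_if_interval_integrals_zero)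
    show "\<forall>a b. set_integrable lborel {a..b} (\<lambda>x. g\<^sub>1 x - g\<^sub>2 x)"
      using I by (blast intro: set_integral_diff(1))
    fix a b :: real
    show "(LBINT t=ereal a..ereal b. g\<^sub>1 t - g\<^sub>2 t) = 0"
      using has_weak_deriv_FTC[OF assms(1), of b a] has_weak_deriv_FTC[OF assms(2), of b a]
      by (simp add: interval_lebesgue_integral_diff interval_lebesgue_integrable_if_locally I)
  qed
  then show ?thesis by simp
qed

lemma AE_wderiv_eq:
  fixes g g' :: "real \<Rightarrow> real"
  assumes "has_weak_deriv g g'"
  shows "AE x in lborel. wderiv g x = g' x"
  using has_weak_deriv_unique_AE[OF has_weak_deriv_wderiv[OF assms] assms] .

lemma borel_measurable_wderiv: "has_weak_deriv g g' \<Longrightarrow> wderiv g \<in> borel_measurable borel"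
  using locally_integrable_borel_measurable[OF has_weak_deriv_locally_integrable[OF has_weak_deriv_wderiv]]
  by simp

lemma has_weak_deriv_bounded_linear:
  fixes u w :: "real \<Rightarrow> 'a::{banach,second_countable_topology}"
    and T :: "'a \<Rightarrow> 'b::{banach,second_countable_topology}"
  assumes T: "bounded_linear T" and wd: "has_weak_deriv u w"
  shows "has_weak_deriv (\<lambda>x. T (u x)) (\<lambda>x. T (w x))"
proof (rule has_weak_derivI)
  have I: "\<forall>a b. set_integrable lborel {a..b} w" by (rule has_weak_deriv_locally_integrable[OF wd])
  have set_integral_T: "set_integrable lborel A (\<lambda>x. T (w x))
      \<and> T (LINT x:A|lborel. w x) = (LINT x:A|lborel. T (w x))" if "set_integrable lborel A w" for A
  proof -
    have "integrable lborel (\<lambda>x. T (indicator A x *\<^sub>R w x))"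
      using that by (intro integrable_bounded_linear[OF T]) (simp add: set_integrable_def)
    then show ?thesis
      using integral_bounded_linear[OF T, of lborel "\<lambda>x. indicator A x *\<^sub>R w x"] that
      by (simp add: set_integrable_def set_lebesgue_integral_def linear_scale[OF bounded_linear.linear[OF T]])
  qed
  show "\<forall>a b. set_integrable lborel {a..b} (\<lambda>x. T (w x))" using I set_integral_T by blast
  fix a b :: real assume "a \<le> b"
  then have "set_integrable lborel {a<..<b} w"
    using interval_lebesgue_integrable_if_locally[OF I, of a b] by (simp add: interval_lebesgue_integrable_def)
  then show "T (u b) - T (u a) = (LBINT t=ereal a..ereal b. T (w t))"
    using has_weak_deriv_FTC[OF wd, of b a] set_integral_T \<open>a \<le> b\<close>
    by (simp add: interval_lebesgue_integral_def linear_diff[OF bounded_linear.linear[OF T], symmetric])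
qed

lemma has_weak_deriv_add:
  fixes f f' g g' :: "real \<Rightarrow> 'a::{banach,second_countable_topology}"
  assumes wf: "has_weak_deriv f f'" and wg: "has_weak_deriv g g'"
  shows "has_weak_deriv (\<lambda>x. f x + g x) (\<lambda>x. f' x + g' x)"
proof (rule has_weak_derivI)
  have I: "\<forall>a b. set_integrable lborel {a..b} f'" "\<forall>a b. set_integrable lborel {a..b} g'"
    using wf wg by (simp_all add: has_weak_deriv_locally_integrable)
  then show "\<forall>a b. set_integrable lborel {a..b} (\<lambda>x. f' x + g' x)" by (blast intro: set_integral_add(1))
  fix a b :: real
  show "(f b + g b) - (f a + g a) = (LBINT t=ereal a..ereal b. f' t + g' t)"
    using has_weak_deriv_FTC[OF wf, of b a] has_weak_deriv_FTC[OF wg, of b a]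
    by (simp add: interval_lebesgue_integral_add interval_lebesgue_integrable_if_locally I algebra_simps)
qed

lemma has_weak_deriv_diff_const:
  fixes f f' :: "real \<Rightarrow> 'a::{banach,second_countable_topology}"
  assumes "has_weak_deriv f f'"
  shows "has_weak_deriv (\<lambda>x. f x - c) f'"
  using assms unfolding has_weak_deriv_def by (metis (no_types) add_diff_cancel_right' diff_add_eq)

lemma abs_increment_le_if_local:
  fixes G I :: "real \<Rightarrow> real"
  assumes "\<delta> > 0" and "A \<le> B"
    and local: "\<And>a b. A \<le> a \<Longrightarrow> a \<le> b \<Longrightarrow> b \<le> B \<Longrightarrow> b - a < \<delta> \<Longrightarrow> \<bar>G b - G a\<bar> \<le> I b - I a"
  shows "\<bar>G B - G A\<bar> \<le> I B - I A"
proof -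
  have "\<forall>b. A \<le> b \<and> b \<le> B \<and> b - A \<le> real n * (\<delta>/2) \<longrightarrow> \<bar>G b - G A\<bar> \<le> I b - I A" for n
  proof (induction n)
    case (Suc n)
    show ?case
    proof (intro allI impI)
      fix b assume b: "A \<le> b \<and> b \<le> B \<and> b - A \<le> real (Suc n) * (\<delta>/2)"
      show "\<bar>G b - G A\<bar> \<le> I b - I A"
      proof (cases "b - A \<le> real n * (\<delta>/2)")
        case False
        define c where "c = A + real n * (\<delta>/2)"
        have "A \<le> c" "c \<le> b" "b - c < \<delta>" using False b \<open>\<delta> > 0\<close> by (auto simp: c_def algebra_simps)
        then show ?thesis using local[of c b] Suc[rule_format, of c] b by (auto simp: c_def)
      qed (use Suc b in auto)
    qed
  qed (auto dest: antisym)
  moreover obtain n :: nat where "(B - A) / (\<delta>/2) \<le> n" using real_arch_simple by blast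
  then have "B - A \<le> real n * (\<delta>/2)" using \<open>\<delta> > 0\<close> by (simp add: field_simps)
  ultimately show ?thesis using \<open>A \<le> B\<close> by auto
qed

lemma eq_if_local_increments_small:
  fixes G I :: "real \<Rightarrow> real"
  assumes "A \<le> B"
    and small: "\<And>\<epsilon>. \<epsilon> > 0 \<Longrightarrow> \<exists>\<delta>>0. \<forall>a b. A \<le> a \<longrightarrow> a \<le> b \<longrightarrow> b \<le> B \<longrightarrow> b - a < \<delta> \<longrightarrow>
                  \<bar>G b - G a\<bar> \<le> \<epsilon> * (I b - I a)"
  shows "G B = G A"
proof -
  have bound: "\<bar>G B - G A\<bar> \<le> \<epsilon> * (I B - I A)" if \<epsilon>: "\<epsilon> > 0" for \<epsilon>
  proof -
    obtain \<delta> where "\<delta> > 0" and "\<forall>a b. A \<le> a \<longrightarrow> a \<le> b \<longrightarrow> b \<le> B \<longrightarrow> b - a < \<delta> \<longrightarrow>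
        \<bar>G b - G a\<bar> \<le> \<epsilon> * (I b - I a)"
      using small[OF \<epsilon>] by blast
    then show ?thesis
      using abs_increment_le_if_local[of \<delta> A B G "\<lambda>x. \<epsilon> * I x"] \<open>A \<le> B\<close> by (simp add: algebra_simps)
  qed
  have "\<bar>G B - G A\<bar> \<le> 0 + \<epsilon>" if "\<epsilon> > 0" for \<epsilon>
  proof -
    let ?K = "I B - I A"
    have "\<epsilon> / (1 + \<bar>?K\<bar>) * ?K \<le> \<epsilon> / (1 + \<bar>?K\<bar>) * (1 + \<bar>?K\<bar>)"
      using that by (intro mult_left_mono) auto
    then show ?thesis using bound[of "\<epsilon> / (1 + \<bar>?K\<bar>)"] that by simp
  qed
  then show ?thesis using field_le_epsilon[of "\<bar>G B - G A\<bar>" 0] by simp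
qed

lemma MVT_within_interval:
  fixes \<Phi> \<Phi>' :: "real \<Rightarrow> real"
  assumes S: "is_interval S" and "p \<in> S" "q \<in> S"
    and d\<Phi>: "\<And>s. s \<in> S \<Longrightarrow> (\<Phi> has_real_derivative \<Phi>' s) (at s within S)"
  obtains \<xi> where "min p q \<le> \<xi>" "\<xi> \<le> max p q" "\<Phi> q - \<Phi> p = \<Phi>' \<xi> * (q - p)"
proof -
  have ordered: "\<exists>\<xi>\<in>{x..y}. \<Phi> y - \<Phi> x = \<Phi>' \<xi> * (y - x)" if "x \<in> S" "y \<in> S" "x \<le> y" for x y
  proof -
    have sub: "{x..y} \<subseteq> S" using S that unfolding is_interval_1 by (meson atLeastAtMost_iff subsetI)
    have "(\<Phi> has_derivative (\<lambda>h. \<Phi>' s * h)) (at s within {x..y})" if "x \<le> s" "s \<le> y" for s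
      using DERIV_subset[OF d\<Phi> sub, of s] sub that by (simp add: has_field_derivative_def subset_iff)
    then have "\<exists>\<xi>\<in>{x..y}. \<Phi> y - \<Phi> x = (\<lambda>h. \<Phi>' \<xi> * h) (y - x)"
      by (intro mvt_very_simple[OF \<open>x \<le> y\<close>])
    then show ?thesis by simp
  qed
  show ?thesis
  proof (cases "p \<le> q")
    case True
    then obtain \<xi> where "\<xi> \<in> {p..q}" "\<Phi> q - \<Phi> p = \<Phi>' \<xi> * (q - p)" using ordered[of p q] assms by blast
    then show ?thesis using True that[of \<xi>] by simp
  next
    case False
    then obtain \<xi> where "\<xi> \<in> {q..p}" "\<Phi> p - \<Phi> q = \<Phi>' \<xi> * (p - q)" using ordered[of q p] assms by auto
    then show ?thesis using False that[of \<xi>] by (simp add: algebra_simps)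
  qed
qed

lemma locally_integrable_continuous_mult:
  fixes \<psi> g :: "real \<Rightarrow> real"
  assumes \<psi>: "continuous_on UNIV \<psi>" and g: "\<forall>a b. set_integrable lborel {a..b} g"
  shows "\<forall>a b. set_integrable lborel {a..b} (\<lambda>x. \<psi> x * g x)"
proof (intro allI)
  fix a b :: real
  have [measurable]: "\<psi> \<in> borel_measurable borel" "g \<in> borel_measurable borel"
    using borel_measurable_continuous_onI[OF \<psi>] locally_integrable_borel_measurable[OF g] by simp_all
  obtain K where K: "\<forall>x\<in>{a..b}. \<bar>\<psi> x\<bar> \<le> K"
    using compact_imp_bounded[OF compact_continuous_image[OF continuous_on_subset[OF \<psi>], of "{a..b}"]]
    by (auto simp: bounded_iff)
  have "integrable lborel (\<lambda>x. K * (indicator {a..b} x *\<^sub>R g x))"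
    using g unfolding set_integrable_def by auto
  then show "set_integrable lborel {a..b} (\<lambda>x. \<psi> x * g x)"
    unfolding set_integrable_def
  proof (rule Bochner_Integration.integrable_bound)
    show "AE x in lborel. norm (indicator {a..b} x *\<^sub>R (\<psi> x * g x)) \<le> norm (K * (indicator {a..b} x *\<^sub>R g x))"
      using K by (intro AE_I2) (force simp: indicator_def abs_mult intro: mult_right_mono)
  qed auto
qed

lemma abs_interval_integral_mult_diff_le:
  fixes g \<psi> :: "real \<Rightarrow> real"
  assumes "a \<le> b" and g: "set_integrable lborel {a..b} g"
    and \<psi>g: "set_integrable lborel {a..b} (\<lambda>t. \<psi> t * g t)"
    and close: "\<And>t. t \<in> {a..b} \<Longrightarrow> \<bar>c - \<psi> t\<bar> \<le> \<epsilon>"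
  shows "\<bar>c * (LBINT t=ereal a..ereal b. g t) - (LBINT t=ereal a..ereal b. \<psi> t * g t)\<bar>
    \<le> \<epsilon> * (LBINT t=ereal a..ereal b. \<bar>g t\<bar>)"
proof -
  have cg: "set_integrable lborel {a..b} (\<lambda>t. c * g t)" using g by auto
  have diff: "set_integrable lborel {a..b} (\<lambda>t. (c - \<psi> t) * g t)"
    using set_integral_diff(1)[OF cg \<psi>g] by (simp add: left_diff_distrib)
  have abs_g: "set_integrable lborel {a..b} (\<lambda>t. \<epsilon> * \<bar>g t\<bar>)" using set_integrable_abs[OF g] by auto
  have "c * (LBINT t=ereal a..ereal b. g t) - (LBINT t=ereal a..ereal b. \<psi> t * g t)
      = (LINT t:{a..b}|lborel. (c - \<psi> t) * g t)"
    using \<open>a \<le> b\<close> set_integral_diff(2)[OF cg \<psi>g] by (simp add: interval_integral_Icc left_diff_distrib)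
  moreover have bound: "s * (LINT t:{a..b}|lborel. (c - \<psi> t) * g t) \<le> \<epsilon> * (LINT t:{a..b}|lborel. \<bar>g t\<bar>)"
    if "\<bar>s\<bar> = 1" for s
  proof -
    have "s * ((c - \<psi> t) * g t) \<le> \<epsilon> * \<bar>g t\<bar>" if "t \<in> {a..b}" for t
    proof -
      have "s * ((c - \<psi> t) * g t) \<le> \<bar>c - \<psi> t\<bar> * \<bar>g t\<bar>"
        using \<open>\<bar>s\<bar> = 1\<close> abs_ge_self[of "s * ((c - \<psi> t) * g t)"] by (simp add: abs_mult)
      also have "\<dots> \<le> \<epsilon> * \<bar>g t\<bar>" using close[OF that] by (rule mult_right_mono) simp
      finally show ?thesis .
    qed
    then have "(LINT t:{a..b}|lborel. s * ((c - \<psi> t) * g t)) \<le> (LINT t:{a..b}|lborel. \<epsilon> * \<bar>g t\<bar>)"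
      using diff abs_g by (intro set_integral_mono) auto
    then show ?thesis by simp
  qed
  ultimately show ?thesis
    using \<open>a \<le> b\<close> bound[of 1] bound[of "-1"] by (simp add: interval_integral_Icc abs_le_iff)
qed

lemma chain_rule_modulus:
  fixes \<rho> \<Phi>' :: "real \<Rightarrow> real"
  assumes S: "is_interval S" "closed S" and \<rho>S: "\<And>x. \<rho> x \<in> S"
    and c\<rho>: "continuous_on UNIV \<rho>" and c\<Phi>': "continuous_on S \<Phi>'" and "\<epsilon> > 0"
  obtains \<delta> where "\<delta> > 0"
    "\<And>a b t \<xi>. A \<le> a \<Longrightarrow> t \<in> {a..b} \<Longrightarrow> b \<le> B \<Longrightarrow> b - a < \<delta> \<Longrightarrow>
      min (\<rho> a) (\<rho> b) \<le> \<xi> \<Longrightarrow> \<xi> \<le> max (\<rho> a) (\<rho> b) \<Longrightarrow> \<bar>\<Phi>' \<xi> - \<Phi>' (\<rho> t)\<bar> \<le> \<epsilon>"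
proof -
  obtain R where R: "\<forall>t\<in>{A..B}. \<bar>\<rho> t\<bar> \<le> R"
    using compact_imp_bounded[OF compact_continuous_image[OF continuous_on_subset[OF c\<rho>], of "{A..B}"]]
    by (auto simp: bounded_iff)
  define K where "K = S \<inter> {-R-1..R+1}"
  have "uniformly_continuous_on K \<Phi>'"
    using S(2) by (intro compact_uniformly_continuous continuous_on_subset[OF c\<Phi>'])
      (auto simp: K_def intro: closed_Int_compact)
  then obtain \<eta> where \<eta>: "\<eta> > 0" "\<And>x x'. x \<in> K \<Longrightarrow> x' \<in> K \<Longrightarrow> dist x' x < \<eta> \<Longrightarrow> dist (\<Phi>' x') (\<Phi>' x) < \<epsilon>"
    unfolding uniformly_continuous_on_def using \<open>\<epsilon> > 0\<close> by metis
  have "uniformly_continuous_on {A..B} \<rho>"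
    by (intro compact_uniformly_continuous continuous_on_subset[OF c\<rho>]) auto
  then obtain \<delta> where \<delta>: "\<delta> > 0"
    "\<And>x x'. x \<in> {A..B} \<Longrightarrow> x' \<in> {A..B} \<Longrightarrow> dist x' x < \<delta> \<Longrightarrow> dist (\<rho> x') (\<rho> x) < min \<eta> 1"
    unfolding uniformly_continuous_on_def using \<eta>(1) by (metis min_less_iff_conj zero_less_one)
  show ?thesis
  proof (rule that[OF \<delta>(1)])
    fix a b t \<xi>
    assume ab: "A \<le> a" "t \<in> {a..b}" "b \<le> B" "b - a < \<delta>"
      and \<xi>: "min (\<rho> a) (\<rho> b) \<le> \<xi>" "\<xi> \<le> max (\<rho> a) (\<rho> b)"
    have "dist (\<rho> a) (\<rho> t) < min \<eta> 1" "dist (\<rho> b) (\<rho> t) < min \<eta> 1"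
      using \<delta>(2)[of t a] \<delta>(2)[of t b] ab by (auto simp: dist_real_def)
    then have close: "\<bar>\<xi> - \<rho> t\<bar> < min \<eta> 1"
      using \<xi> by (auto simp: dist_real_def min_def max_def split: if_splits)
    have "min (\<rho> a) (\<rho> b) \<in> S" "max (\<rho> a) (\<rho> b) \<in> S"
      using \<rho>S[of a] \<rho>S[of b] by (auto simp: min_def max_def)
    then have "\<xi> \<in> S" using S(1) \<xi> unfolding is_interval_1 by blast
    moreover have "\<bar>\<rho> t\<bar> \<le> R" using R ab by auto
    ultimately have "\<rho> t \<in> K" "\<xi> \<in> K" using close \<rho>S[of t] by (auto simp: K_def)
    then show "\<bar>\<Phi>' \<xi> - \<Phi>' (\<rho> t)\<bar> \<le> \<epsilon>" using \<eta>(2) close by (force simp: dist_real_def)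
  qed
qed

text \<open>Since \<open>\<rho>\<close> is only absolutely continuous, the chain rule is proved by hand: on short
  intervals the mean value theorem and the uniform continuity of \<open>\<Phi>'\<close> bound the defect
  \<open>\<Phi> (\<rho> b) - \<Phi> (\<rho> a) - \<integral>\<^sub>a\<^sup>b \<Phi>' (\<rho> t) \<rho>' t dt\<close> by \<open>\<epsilon> \<integral>\<^sub>a\<^sup>b |\<rho>' t| dt\<close>, and these defects add up along a partition.\<close>

lemma has_weak_deriv_chain:
  fixes \<rho> \<rho>' \<Phi> \<Phi>' :: "real \<Rightarrow> real" and S :: "real set"
  assumes wd: "has_weak_deriv \<rho> \<rho>'"
    and S: "is_interval S" "closed S" and \<rho>S: "\<And>x. \<rho> x \<in> S"
    and d\<Phi>: "\<And>s. s \<in> S \<Longrightarrow> (\<Phi> has_real_derivative \<Phi>' s) (at s within S)"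
    and c\<Phi>': "continuous_on S \<Phi>'"
  shows "has_weak_deriv (\<lambda>x. \<Phi> (\<rho> x)) (\<lambda>x. \<Phi>' (\<rho> x) * \<rho>' x)"
proof -
  have I: "\<forall>a b. set_integrable lborel {a..b} \<rho>'" by (rule has_weak_deriv_locally_integrable[OF wd])
  have c\<rho>: "continuous_on UNIV \<rho>" by (rule has_weak_deriv_continuous[OF wd])
  have "continuous_on UNIV (\<lambda>x. \<Phi>' (\<rho> x))"
    by (rule continuous_on_compose2[OF c\<Phi>' c\<rho>]) (use \<rho>S in auto)
  then have I\<Phi>: "\<forall>a b. set_integrable lborel {a..b} (\<lambda>x. \<Phi>' (\<rho> x) * \<rho>' x)"
    by (rule locally_integrable_continuous_mult[OF _ I])
  have I_abs: "\<forall>a b. set_integrable lborel {a..b} (\<lambda>x. \<bar>\<rho>' x\<bar>)" using I by (auto intro: set_integrable_abs)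
  define J where "J a b = (LBINT t=ereal a..ereal b. \<Phi>' (\<rho> t) * \<rho>' t)" for a b
  define L where "L a b = (LBINT t=ereal a..ereal b. \<bar>\<rho>' t\<bar>)" for a b
  have additive: "J A b - J A a = J a b" "L A b - L A a = L a b" for A a b
    unfolding J_def L_def
    using interval_lebesgue_integrable_if_locally[OF I\<Phi>, of "min A (min a b)" "max A (max a b)"]
      interval_lebesgue_integrable_if_locally[OF I_abs, of "min A (min a b)" "max A (max a b)"]
    by (simp_all only: ereal_min ereal_max flip: interval_integral_sum)
  have local: "\<exists>\<delta>>0. \<forall>a b. A \<le> a \<longrightarrow> a \<le> b \<longrightarrow> b \<le> B \<longrightarrow> b - a < \<delta> \<longrightarrow>
      \<bar>(\<Phi> (\<rho> b) - J A b) - (\<Phi> (\<rho> a) - J A a)\<bar> \<le> \<epsilon> * (L A b - L A a)" if "\<epsilon> > 0" for A B \<epsilon>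
  proof -
    obtain \<delta> where "\<delta> > 0" and modulus: "\<And>a b t \<xi>. A \<le> a \<Longrightarrow> t \<in> {a..b} \<Longrightarrow> b \<le> B \<Longrightarrow> b - a < \<delta> \<Longrightarrow>
      min (\<rho> a) (\<rho> b) \<le> \<xi> \<Longrightarrow> \<xi> \<le> max (\<rho> a) (\<rho> b) \<Longrightarrow> \<bar>\<Phi>' \<xi> - \<Phi>' (\<rho> t)\<bar> \<le> \<epsilon>"
      using chain_rule_modulus[OF S \<rho>S c\<rho> c\<Phi>' \<open>\<epsilon> > 0\<close>] by blast
    have bound: "\<bar>\<Phi> (\<rho> b) - \<Phi> (\<rho> a) - J a b\<bar> \<le> \<epsilon> * L a b"
      if ab: "A \<le> a" "a \<le> b" "b \<le> B" "b - a < \<delta>" for a b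
    proof -
      obtain \<xi> where \<xi>: "min (\<rho> a) (\<rho> b) \<le> \<xi>" "\<xi> \<le> max (\<rho> a) (\<rho> b)"
        and mvt: "\<Phi> (\<rho> b) - \<Phi> (\<rho> a) = \<Phi>' \<xi> * (\<rho> b - \<rho> a)"
        using MVT_within_interval[OF S(1) \<rho>S \<rho>S d\<Phi>] by blast
      have "\<bar>\<Phi>' \<xi> - \<Phi>' (\<rho> t)\<bar> \<le> \<epsilon>" if "t \<in> {a..b}" for t
        using modulus[OF ab(1) that ab(3,4) \<xi>] .
      then show ?thesis
        unfolding mvt has_weak_deriv_FTC[OF wd, of b a] J_def L_def
        using abs_interval_integral_mult_diff_le[OF \<open>a \<le> b\<close>] I I\<Phi> by simp
    qed
    have shift: "(\<Phi> (\<rho> b) - J A b) - (\<Phi> (\<rho> a) - J A a) = \<Phi> (\<rho> b) - \<Phi> (\<rho> a) - J a b" for a b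
      using additive(1)[where A = A and a = a and b = b] by simp
    show ?thesis unfolding shift additive(2) using \<open>\<delta> > 0\<close> bound by blast
  qed
  have "\<Phi> (\<rho> B) - \<Phi> (\<rho> A) = J A B" if "A \<le> B" for A B
    using eq_if_local_increments_small[OF that local] by (simp add: J_def)
  then show ?thesis by (intro has_weak_derivI[OF I\<Phi>]) (simp add: J_def)
qed

lemma has_weak_deriv_norm_sq:
  fixes u w :: "real \<Rightarrow> complex"
  assumes "has_weak_deriv u w"
  shows "has_weak_deriv (\<lambda>x. (cmod (u x))\<^sup>2) (\<lambda>x. 2 * Re (w x * cnj (u x)))"
proof -
  have "((\<lambda>s. s\<^sup>2) has_real_derivative 2 * s) (at s within UNIV)" for s :: real
    by (auto intro!: derivative_eq_intros)
  then have square: "has_weak_deriv (\<lambda>x. (g x)\<^sup>2) (\<lambda>x. 2 * g x * g' x)"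
    if "has_weak_deriv g g'" for g g' :: "real \<Rightarrow> real"
    using has_weak_deriv_chain[OF that, of UNIV "\<lambda>s. s\<^sup>2" "\<lambda>s. 2 * s"] by (auto intro: continuous_intros)
  have "has_weak_deriv (\<lambda>x. (Re (u x))\<^sup>2 + (Im (u x))\<^sup>2) (\<lambda>x. 2 * Re (u x) * Re (w x) + 2 * Im (u x) * Im (w x))"
    by (intro has_weak_deriv_add square has_weak_deriv_bounded_linear[OF bounded_linear_Re assms]
        has_weak_deriv_bounded_linear[OF bounded_linear_Im assms])
  then show ?thesis by (simp add: cmod_power2 algebra_simps)
qed

lemma has_weak_deriv_comp_norm_sq:
  assumes "has_weak_deriv u w"
    and dh: "\<And>s. s \<ge> 0 \<Longrightarrow> (h has_real_derivative h' s) (at s within {0..})" and ch: "continuous_on {0..} h'"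
  shows "has_weak_deriv (\<lambda>x. h ((cmod (u x))\<^sup>2)) (\<lambda>x. h' ((cmod (u x))\<^sup>2) * (2 * Re (w x * cnj (u x))))"
  by (rule has_weak_deriv_chain[OF has_weak_deriv_norm_sq[OF assms(1)], where S="{0..}"])
    (use dh ch in \<open>auto simp: is_interval_ci\<close>)

section \<open>The potential\<close>

lemma smooth_on_nonneg_derivative:
  assumes "smooth_on_nonneg g"
  obtains g' where "\<And>x. x \<ge> 0 \<Longrightarrow> (g has_real_derivative g' x) (at x within {0..})"
    and "continuous_on {0..} g'"
proof -
  obtain D where "D 0 = g" and D: "\<And>n x. x \<ge> 0 \<Longrightarrow> (D n has_real_derivative D (Suc n) x) (at x within {0..})"
    using assms unfolding smooth_on_nonneg_def by blast
  show ?thesis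
  proof (rule that)
    show "(g has_real_derivative D 1 x) (at x within {0..})" if "x \<ge> 0" for x
      using D[OF that, of 0] \<open>D 0 = g\<close> by simp
    show "continuous_on {0..} (D 1)"
      by (rule DERIV_continuous_on[of _ _ "D (Suc 1)"]) (use D in simp)
  qed
qed

lemma DERIV_within_nonneg_imp_at:
  assumes "(g has_real_derivative d) (at x within {0..})" and "x > 0"
  shows "(g has_real_derivative d) (at x)"
proof -
  have "(g has_real_derivative d) (at x within {0<..})"
    by (rule has_field_derivative_subset[OF assms(1)]) auto
  then show ?thesis using at_within_open[of x "{0<..}"] assms(2) by simp
qed

lemma Fpot_has_derivative:
  assumes cf: "continuous_on {0..} f" and "\<sigma> \<ge> 0"
  shows "(Fpot f r0 has_real_derivative - f \<sigma>) (at \<sigma> within {0..})"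
proof -
  define b where "b = max \<sigma> (r0\<^sup>2) + 1"
  have "((\<lambda>s. LBINT w=r0\<^sup>2..s. f w) has_vector_derivative f \<sigma>) (at \<sigma> within {0..b})"
    using \<open>\<sigma> \<ge> 0\<close> by (intro interval_integral_FTC2 continuous_on_subset[OF cf]) (auto simp: b_def)
  then have "(Fpot f r0 has_real_derivative - f \<sigma>) (at \<sigma> within {0..b})"
    unfolding Fpot_def[abs_def] has_real_derivative_iff_has_vector_derivative
    by (subst interval_integral_endpoints_reverse) (rule derivative_intros)
  moreover have "at \<sigma> within {0..b} = at \<sigma> within {0..}"
    by (rule at_within_nhd[where S="{..<b}"]) (auto simp: b_def)
  ultimately show ?thesis by simp
qed

lemma continuous_on_Fpot:
  assumes "continuous_on {0..} f"
  shows "continuous_on {0..} (Fpot f r0)"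
  by (rule DERIV_continuous_on[OF Fpot_has_derivative[OF assms]]) simp

lemma deriv2_Fpot:
  assumes df: "\<And>x. x \<ge> 0 \<Longrightarrow> (f has_real_derivative f' x) (at x within {0..})" and "\<sigma> > 0"
  shows "deriv (deriv (Fpot f r0)) \<sigma> = - f' \<sigma>"
proof -
  have cf: "continuous_on {0..} f" using df by (rule DERIV_continuous_on) simp
  have "deriv (Fpot f r0) x = - f x" if "x > 0" for x
    using DERIV_imp_deriv[OF DERIV_within_nonneg_imp_at[OF Fpot_has_derivative[OF cf] that]] that by simp
  then have ev: "\<forall>\<^sub>F x in nhds \<sigma>. deriv (Fpot f r0) x = - f x"
    using eventually_nhds_in_open[of "{0<..}" \<sigma>] \<open>\<sigma> > 0\<close> by (auto elim!: eventually_mono)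
  have "((\<lambda>x. - f x) has_real_derivative - f' \<sigma>) (at \<sigma>)"
    using DERIV_within_nonneg_imp_at[OF df \<open>\<sigma> > 0\<close>] \<open>\<sigma> > 0\<close> by (auto intro: DERIV_minus)
  then have "(deriv (Fpot f r0) has_real_derivative - f' \<sigma>) (at \<sigma>)"
    using DERIV_cong_ev[OF refl ev refl] by simp
  then show ?thesis by (rule DERIV_imp_deriv)
qed

lemma quadratic_bounds_if_quotient_tendsto:
  fixes F :: "real \<Rightarrow> real"
  assumes K: "compact K" "a \<in> K" and cF: "continuous_on K F" and "F a = 0"
    and pos: "\<And>\<sigma>. \<sigma> \<in> K \<Longrightarrow> \<sigma> \<noteq> a \<Longrightarrow> F \<sigma> > 0"
    and lim: "((\<lambda>\<sigma>. F \<sigma> / (\<sigma> - a)\<^sup>2) \<longlongrightarrow> l) (at a)" and "l > 0"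
  obtains c C where "c > 0" "\<And>\<sigma>. \<sigma> \<in> K \<Longrightarrow> c * (\<sigma> - a)\<^sup>2 \<le> F \<sigma>" "\<And>\<sigma>. \<sigma> \<in> K \<Longrightarrow> F \<sigma> \<le> C * (\<sigma> - a)\<^sup>2"
proof -
  define \<phi> where "\<phi> \<sigma> = (if \<sigma> = a then l else F \<sigma> / (\<sigma> - a)\<^sup>2)" for \<sigma>
  have "continuous (at x within K) \<phi>" if "x \<in> K" for x
  proof (cases "x = a")
    case True
    have "(\<phi> \<longlongrightarrow> l) (at a)"
      using lim by (rule Lim_transform_eventually) (simp add: eventually_at_filter \<phi>_def)
    then show ?thesis
      using True by (simp add: isCont_def \<phi>_def continuous_at_imp_continuous_at_within)
  next
    case False
    have "continuous (at x within K) (\<lambda>\<sigma>. F \<sigma> / (\<sigma> - a)\<^sup>2)"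
      using cF that False by (intro continuous_intros) (auto simp: continuous_on_eq_continuous_within)
    moreover have "F x' / (x' - a)\<^sup>2 = \<phi> x'" if "dist x' x < \<bar>x - a\<bar>" for x'
      using that by (auto simp: \<phi>_def dist_real_def)
    ultimately show ?thesis
      using continuous_transform_within[of x K _ "\<bar>x - a\<bar>" \<phi>] \<open>x \<in> K\<close> False by simp
  qed
  then have c\<phi>: "continuous_on K \<phi>" by (simp add: continuous_on_eq_continuous_within)
  obtain s\<^sub>0 where s\<^sub>0: "s\<^sub>0 \<in> K" "\<forall>y\<in>K. \<phi> s\<^sub>0 \<le> \<phi> y" using continuous_attains_inf[OF K(1) _ c\<phi>] K(2) by blast
  obtain s\<^sub>1 where s\<^sub>1: "s\<^sub>1 \<in> K" "\<forall>y\<in>K. \<phi> y \<le> \<phi> s\<^sub>1" using continuous_attains_sup[OF K(1) _ c\<phi>] K(2) by blast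
  have F_eq: "F \<sigma> = \<phi> \<sigma> * (\<sigma> - a)\<^sup>2" for \<sigma> by (simp add: \<phi>_def \<open>F a = 0\<close>)
  show ?thesis
  proof (rule that[of "\<phi> s\<^sub>0" "\<phi> s\<^sub>1"])
    show "\<phi> s\<^sub>0 > 0" using pos[OF s\<^sub>0(1)] \<open>l > 0\<close> by (cases "s\<^sub>0 = a") (auto simp: \<phi>_def)
  qed (use s\<^sub>0 s\<^sub>1 in \<open>auto simp: F_eq intro!: mult_right_mono\<close>)
qed

lemma Fpot_quadratic_bounds:
  assumes df: "\<And>x. x \<ge> 0 \<Longrightarrow> (f has_real_derivative f' x) (at x within {0..})"
    and "r0 \<noteq> 0" "f (r0\<^sup>2) = 0" "f' (r0\<^sup>2) < 0" "r0\<^sup>2 \<le> M"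
    and pos: "\<And>\<sigma>. \<sigma> \<in> {0..M} \<Longrightarrow> \<sigma> \<noteq> r0\<^sup>2 \<Longrightarrow> Fpot f r0 \<sigma> > 0"
  obtains c C where "c > 0"
    "\<And>\<sigma>. \<sigma> \<in> {0..M} \<Longrightarrow> c * (\<sigma> - r0\<^sup>2)\<^sup>2 \<le> Fpot f r0 \<sigma>"
    "\<And>\<sigma>. \<sigma> \<in> {0..M} \<Longrightarrow> Fpot f r0 \<sigma> \<le> C * (\<sigma> - r0\<^sup>2)\<^sup>2"
proof (rule quadratic_bounds_if_quotient_tendsto[of "{0..M}" "r0\<^sup>2" "Fpot f r0" "- f' (r0\<^sup>2) / 2"])
  have cf: "continuous_on {0..} f" using df by (rule DERIV_continuous_on) simp
  have dF: "(Fpot f r0 has_real_derivative - f \<sigma>) (at \<sigma>)" if "\<sigma> > 0" for \<sigma>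
    using DERIV_within_nonneg_imp_at[OF Fpot_has_derivative[OF cf] that] that by simp
  show "continuous_on {0..M} (Fpot f r0)"
    using continuous_on_Fpot[OF cf] by (rule continuous_on_subset) auto
  have "\<forall>\<^sub>F x in nhds (r0\<^sup>2). x \<in> {0<..}" using \<open>r0 \<noteq> 0\<close> by (intro eventually_nhds_in_open) auto
  then have near_pos: "\<forall>\<^sub>F x in at (r0\<^sup>2). x > 0"
    unfolding eventually_at_filter by (rule eventually_mono) auto
  show "((\<lambda>\<sigma>. Fpot f r0 \<sigma> / (\<sigma> - r0\<^sup>2)\<^sup>2) \<longlongrightarrow> - f' (r0\<^sup>2) / 2) (at (r0\<^sup>2))"
  proof (rule lhopital[where f' = "\<lambda>\<sigma>. - f \<sigma>" and g' = "\<lambda>\<sigma>. 2 * (\<sigma> - r0\<^sup>2)"])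
    have "isCont (Fpot f r0) (r0\<^sup>2)" using dF[of "r0\<^sup>2"] \<open>r0 \<noteq> 0\<close> by (simp add: DERIV_isCont)
    then show "(Fpot f r0 \<longlongrightarrow> 0) (at (r0\<^sup>2))" by (simp add: isCont_def Fpot_def)
    show "((\<lambda>\<sigma>. (\<sigma> - r0\<^sup>2)\<^sup>2) \<longlongrightarrow> 0) (at (r0\<^sup>2))" by (rule tendsto_eq_intros | simp)+
    show "\<forall>\<^sub>F x in at (r0\<^sup>2). (x - r0\<^sup>2)\<^sup>2 \<noteq> 0" "\<forall>\<^sub>F x in at (r0\<^sup>2). 2 * (x - r0\<^sup>2) \<noteq> 0"
      by (simp_all add: eventually_at_filter)
    show "\<forall>\<^sub>F x in at (r0\<^sup>2). (Fpot f r0 has_real_derivative - f x) (at x)"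
      using near_pos by (rule eventually_mono) (rule dF)
    show "\<forall>\<^sub>F x in at (r0\<^sup>2). ((\<lambda>\<sigma>. (\<sigma> - r0\<^sup>2)\<^sup>2) has_real_derivative 2 * (x - r0\<^sup>2)) (at x)"
      by (intro always_eventually allI) (auto intro!: derivative_eq_intros)
    have "((\<lambda>y. (f y - f (r0\<^sup>2)) / (y - r0\<^sup>2)) \<longlongrightarrow> f' (r0\<^sup>2)) (at (r0\<^sup>2))"
      using DERIV_within_nonneg_imp_at[OF df] \<open>r0 \<noteq> 0\<close> by (simp add: has_field_derivative_iff)
    then have "((\<lambda>y. (-1/2) * ((f y - f (r0\<^sup>2)) / (y - r0\<^sup>2))) \<longlongrightarrow> (-1/2) * f' (r0\<^sup>2)) (at (r0\<^sup>2))"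
      by (intro tendsto_mult tendsto_const)
    then show "((\<lambda>x. - f x / (2 * (x - r0\<^sup>2))) \<longlongrightarrow> - f' (r0\<^sup>2) / 2) (at (r0\<^sup>2))"
      using \<open>f (r0\<^sup>2) = 0\<close> by (simp add: field_simps)
  qed
qed (use assms in \<open>auto simp: Fpot_def\<close>)

section \<open>Pointwise bounds on the energy density\<close>

text \<open>Only a negative \<open>\<kappa>\<close> can spoil coercivity: through \<open>r\<^sup>2 \<le> 4 \<sigma> W\<close> its term is absorbed by
  the kinetic term \<open>W\<close>, at the cost of the factor \<open>1 + 2 min \<kappa> 0 \<sigma> d\<^sup>2\<close>.\<close>

lemma integrand_lower_bound:
  fixes W \<sigma> F\<sigma> d r \<kappa> c\<^sub>1 c\<^sub>2 a :: real
  assumes "W \<ge> 0" and r: "r\<^sup>2 \<le> 4 * \<sigma> * W" and c\<^sub>2: "1 + 2 * min \<kappa> 0 * \<sigma> * d\<^sup>2 \<ge> c\<^sub>2"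
    and F: "F\<sigma> \<ge> c\<^sub>1 * (\<sigma> - a)\<^sup>2" and "c\<^sub>1 > 0" "c\<^sub>2 > 0"
  shows "W + F\<sigma> + \<kappa> / 2 * (d * r)\<^sup>2 \<ge> min c\<^sub>1 c\<^sub>2 * (W + (\<sigma> - a)\<^sup>2)"
proof -
  let ?k = "min \<kappa> 0"
  have "\<kappa> / 2 * (d * r)\<^sup>2 \<ge> (?k / 2 * d\<^sup>2) * r\<^sup>2"
    using mult_right_mono[of ?k \<kappa> "d\<^sup>2 * r\<^sup>2"] by (simp add: power_mult_distrib mult.assoc)
  moreover have "(?k / 2 * d\<^sup>2) * r\<^sup>2 \<ge> (?k / 2 * d\<^sup>2) * (4 * \<sigma> * W)"
    using r by (intro mult_left_mono_neg) (auto intro: mult_nonpos_nonneg)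
  moreover have "W + (?k / 2 * d\<^sup>2) * (4 * \<sigma> * W) = W * (1 + 2 * ?k * \<sigma> * d\<^sup>2)"
    by (simp add: algebra_simps)
  moreover have "W * (1 + 2 * ?k * \<sigma> * d\<^sup>2) \<ge> W * min c\<^sub>1 c\<^sub>2"
    using \<open>W \<ge> 0\<close> c\<^sub>2 by (intro mult_left_mono) auto
  moreover have "c\<^sub>1 * (\<sigma> - a)\<^sup>2 \<ge> min c\<^sub>1 c\<^sub>2 * (\<sigma> - a)\<^sup>2" by (intro mult_right_mono) auto
  ultimately show ?thesis using F by (simp add: algebra_simps)
qed

lemma integrand_upper_bound:
  fixes W \<sigma> F\<sigma> d r \<kappa> C\<^sub>1 B a M :: real
  assumes "W \<ge> 0" "0 \<le> \<sigma>" "\<sigma> \<le> M" and r: "r\<^sup>2 \<le> 4 * \<sigma> * W"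
    and d: "\<bar>d\<bar> \<le> B" and F: "F\<sigma> \<le> C\<^sub>1 * (\<sigma> - a)\<^sup>2"
  shows "W + F\<sigma> + \<kappa> / 2 * (d * r)\<^sup>2 \<le> (1 + \<bar>C\<^sub>1\<bar> + 2 * \<bar>\<kappa>\<bar> * M * B\<^sup>2) * (W + (\<sigma> - a)\<^sup>2)"
proof -
  let ?C = "1 + \<bar>C\<^sub>1\<bar> + 2 * \<bar>\<kappa>\<bar> * M * B\<^sup>2"
  have "4 * \<sigma> * W \<le> 4 * M * W" using \<open>\<sigma> \<le> M\<close> \<open>W \<ge> 0\<close> by (intro mult_right_mono) auto
  moreover have "d\<^sup>2 \<le> B\<^sup>2" using power_mono[OF d abs_ge_zero, of 2] by simp
  ultimately have "d\<^sup>2 * r\<^sup>2 \<le> B\<^sup>2 * (4 * M * W)" using r by (intro mult_mono) auto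
  have "\<kappa> / 2 * (d * r)\<^sup>2 \<le> \<bar>\<kappa>\<bar> / 2 * (d\<^sup>2 * r\<^sup>2)"
    by (simp add: power_mult_distrib mult_right_mono)
  also have "\<dots> \<le> \<bar>\<kappa>\<bar> / 2 * (B\<^sup>2 * (4 * M * W))"
    using \<open>d\<^sup>2 * r\<^sup>2 \<le> B\<^sup>2 * (4 * M * W)\<close> by (intro mult_left_mono) auto
  finally have "\<kappa> / 2 * (d * r)\<^sup>2 \<le> 2 * \<bar>\<kappa>\<bar> * M * B\<^sup>2 * W" by (simp add: mult_ac)
  moreover have "F\<sigma> \<le> \<bar>C\<^sub>1\<bar> * (\<sigma> - a)\<^sup>2"
    using F mult_right_mono[OF abs_ge_self[of C\<^sub>1] zero_le_power2[of "\<sigma> - a"]] by linarith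
  moreover have "\<bar>C\<^sub>1\<bar> * (\<sigma> - a)\<^sup>2 \<le> ?C * (\<sigma> - a)\<^sup>2"
    using \<open>0 \<le> \<sigma>\<close> \<open>\<sigma> \<le> M\<close> by (intro mult_right_mono) auto
  moreover have "W + 2 * \<bar>\<kappa>\<bar> * M * B\<^sup>2 * W \<le> ?C * W"
    using \<open>W \<ge> 0\<close> by (simp add: algebra_simps)
  ultimately show ?thesis by (simp add: algebra_simps)
qed

lemma energy_integrand_comparable:
  fixes F D :: "real \<Rightarrow> real"
  assumes "M \<ge> 0" and cD: "continuous_on {0..M} D"
    and pos: "\<And>\<sigma>. \<sigma> \<in> {0..M} \<Longrightarrow> 1 + 2 * \<kappa> * \<sigma> * (D \<sigma>)\<^sup>2 > 0"
    and "c\<^sub>1 > 0" and F_low: "\<And>\<sigma>. \<sigma> \<in> {0..M} \<Longrightarrow> c\<^sub>1 * (\<sigma> - a)\<^sup>2 \<le> F \<sigma>"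
    and F_up: "\<And>\<sigma>. \<sigma> \<in> {0..M} \<Longrightarrow> F \<sigma> \<le> C\<^sub>1 * (\<sigma> - a)\<^sup>2"
  obtains c C where "c > 0"
    "\<And>\<sigma> W r. \<sigma> \<in> {0..M} \<Longrightarrow> W \<ge> 0 \<Longrightarrow> r\<^sup>2 \<le> 4 * \<sigma> * W \<Longrightarrow>
      c * (W + (\<sigma> - a)\<^sup>2) \<le> W + F \<sigma> + \<kappa> / 2 * (D \<sigma> * r)\<^sup>2"
    "\<And>\<sigma> W r. \<sigma> \<in> {0..M} \<Longrightarrow> W \<ge> 0 \<Longrightarrow> r\<^sup>2 \<le> 4 * \<sigma> * W \<Longrightarrow>
      W + F \<sigma> + \<kappa> / 2 * (D \<sigma> * r)\<^sup>2 \<le> C * (W + (\<sigma> - a)\<^sup>2)"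
proof -
  let ?\<psi> = "\<lambda>\<sigma>. 1 + 2 * min \<kappa> 0 * \<sigma> * (D \<sigma>)\<^sup>2"
  have "continuous_on {0..M} ?\<psi>" by (intro continuous_intros cD)
  then obtain s\<^sub>0 where s\<^sub>0: "s\<^sub>0 \<in> {0..M}" "\<forall>\<sigma>\<in>{0..M}. ?\<psi> s\<^sub>0 \<le> ?\<psi> \<sigma>"
    using continuous_attains_inf[of "{0..M}" ?\<psi>] \<open>M \<ge> 0\<close> by auto
  have "?\<psi> s\<^sub>0 > 0" using pos[OF s\<^sub>0(1)] by (cases "\<kappa> \<ge> 0") (auto simp: min_def)
  obtain B where B: "\<forall>\<sigma>\<in>{0..M}. \<bar>D \<sigma>\<bar> \<le> B"
    using compact_imp_bounded[OF compact_continuous_image[OF cD]] by (auto simp: bounded_iff)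
  show ?thesis
  proof (rule that[of "min c\<^sub>1 (?\<psi> s\<^sub>0)" "1 + \<bar>C\<^sub>1\<bar> + 2 * \<bar>\<kappa>\<bar> * M * B\<^sup>2"])
    fix \<sigma> W r assume "\<sigma> \<in> {0..M}" "W \<ge> 0" "r\<^sup>2 \<le> 4 * \<sigma> * W"
    then show "min c\<^sub>1 (?\<psi> s\<^sub>0) * (W + (\<sigma> - a)\<^sup>2) \<le> W + F \<sigma> + \<kappa> / 2 * (D \<sigma> * r)\<^sup>2"
      using integrand_lower_bound s\<^sub>0(2) F_low \<open>c\<^sub>1 > 0\<close> \<open>?\<psi> s\<^sub>0 > 0\<close> by blast
    show "W + F \<sigma> + \<kappa> / 2 * (D \<sigma> * r)\<^sup>2 \<le> (1 + \<bar>C\<^sub>1\<bar> + 2 * \<bar>\<kappa>\<bar> * M * B\<^sup>2) * (W + (\<sigma> - a)\<^sup>2)"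
      using integrand_upper_bound \<open>\<sigma> \<in> {0..M}\<close> \<open>W \<ge> 0\<close> \<open>r\<^sup>2 \<le> 4 * \<sigma> * W\<close> B F_up by simp
  qed (use \<open>c\<^sub>1 > 0\<close> \<open>?\<psi> s\<^sub>0 > 0\<close> in simp)
qed

lemma energy_integrand_comparable_on_range:
  fixes f h f' h' :: "real \<Rightarrow> real"
  assumes r0: "r0 > 0" and "\<xi> > 0"
    and df: "\<And>x. x \<ge> 0 \<Longrightarrow> (f has_real_derivative f' x) (at x within {0..})"
    and dh: "\<And>x. x \<ge> 0 \<Longrightarrow> (h has_real_derivative h' x) (at x within {0..})"
    and ch: "continuous_on {0..} h'"
    and f_r0: "f (r0\<^sup>2) = 0"
    and H2: "\<forall>\<sigma>\<in>{0..r0\<^sup>2}. 1 + 2 * \<kappa> * \<sigma> * (deriv h \<sigma>)\<^sup>2 > 0"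
    and H3: "\<forall>\<sigma>\<in>{0..<r0\<^sup>2}. Fpot f r0 \<sigma> > 0" "deriv (deriv (Fpot f r0)) (r0\<^sup>2) > 0"
    and xi_F: "\<forall>\<sigma>\<in>{r0\<^sup>2<..r0\<^sup>2 + \<xi>}. Fpot f r0 \<sigma> > 0"
    and xi_h: "\<forall>\<sigma>\<in>{r0\<^sup>2<..r0\<^sup>2 + \<xi>}. 1 + 2 * \<kappa> * \<sigma> * (deriv h \<sigma>)\<^sup>2 > 0"
  obtains c K where "c > 0"
    "\<And>\<sigma> W r. \<sigma> \<in> {0..r0\<^sup>2 + \<xi>} \<Longrightarrow> W \<ge> 0 \<Longrightarrow> r\<^sup>2 \<le> 4 * \<sigma> * W \<Longrightarrow>
      c * (W + (\<sigma> - r0\<^sup>2)\<^sup>2) \<le> W + Fpot f r0 \<sigma> + \<kappa> / 2 * (h' \<sigma> * r)\<^sup>2"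
    "\<And>\<sigma> W r. \<sigma> \<in> {0..r0\<^sup>2 + \<xi>} \<Longrightarrow> W \<ge> 0 \<Longrightarrow> r\<^sup>2 \<le> 4 * \<sigma> * W \<Longrightarrow>
      W + Fpot f r0 \<sigma> + \<kappa> / 2 * (h' \<sigma> * r)\<^sup>2 \<le> K * (W + (\<sigma> - r0\<^sup>2)\<^sup>2)"
proof -
  let ?M = "r0\<^sup>2 + \<xi>"
  have "f' (r0\<^sup>2) < 0" using H3(2) deriv2_Fpot[of f f' "r0\<^sup>2"] df r0 by simp
  moreover have "Fpot f r0 \<sigma> > 0" if "\<sigma> \<in> {0..?M}" "\<sigma> \<noteq> r0\<^sup>2" for \<sigma>
    using H3(1) xi_F that by (cases "\<sigma> < r0\<^sup>2") auto
  ultimately obtain c\<^sub>1 C\<^sub>1 where "c\<^sub>1 > 0" "\<And>\<sigma>. \<sigma> \<in> {0..?M} \<Longrightarrow> c\<^sub>1 * (\<sigma> - r0\<^sup>2)\<^sup>2 \<le> Fpot f r0 \<sigma>"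
    "\<And>\<sigma>. \<sigma> \<in> {0..?M} \<Longrightarrow> Fpot f r0 \<sigma> \<le> C\<^sub>1 * (\<sigma> - r0\<^sup>2)\<^sup>2"
    using Fpot_quadratic_bounds[of f f' r0 ?M] df r0 f_r0 \<open>\<xi> > 0\<close> by auto
  moreover have "1 + 2 * \<kappa> * \<sigma> * (h' \<sigma>)\<^sup>2 > 0" if "\<sigma> \<in> {0..?M}" for \<sigma>
  proof (cases "\<sigma> = 0")
    case False
    then have "deriv h \<sigma> = h' \<sigma>" using DERIV_imp_deriv[OF DERIV_within_nonneg_imp_at] dh that by auto
    then show ?thesis
      using bspec[OF H2, of \<sigma>] bspec[OF xi_h, of \<sigma>] that by (cases "\<sigma> \<le> r0\<^sup>2") auto
  qed simp
  moreover have "?M \<ge> 0" "continuous_on {0..?M} h'" using \<open>\<xi> > 0\<close> ch by (auto intro: continuous_on_subset)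
  ultimately show ?thesis
    using energy_integrand_comparable[of ?M h' \<kappa> c\<^sub>1 "r0\<^sup>2" "Fpot f r0" C\<^sub>1] that by blast
qed

lemma Re_mult_cnj_sq_le: "(2 * Re (w * cnj z))\<^sup>2 \<le> 4 * (cmod z)\<^sup>2 * (cmod w)\<^sup>2"
proof -
  have sq: "(2 * x)\<^sup>2 \<le> 4 * b\<^sup>2 * c\<^sup>2" if "\<bar>x\<bar> \<le> c * b" for x b c :: real
  proof -
    have "x\<^sup>2 \<le> (c * b)\<^sup>2" using power_mono[OF that abs_ge_zero, of 2] by simp
    then show ?thesis by (simp add: power_mult_distrib mult_ac)
  qed
  show ?thesis
    by (rule sq) (use abs_Re_le_cmod[of "w * cnj z"] in \<open>simp only: norm_mult complex_mod_cnj\<close>)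
qed

lemma momentum_integrand_bound:
  fixes w z :: complex and a \<mu> :: real
  assumes "\<mu> > 0" "\<mu> \<le> cmod z"
  shows "\<bar>Re (\<i> * w * cnj z) * (1 - a / (cmod z)\<^sup>2)\<bar> \<le> 1 / \<mu> * ((cmod w)\<^sup>2 + ((cmod z)\<^sup>2 - a)\<^sup>2)"
proof -
  define s where "s = cmod z"
  have s: "s > 0" "\<mu> \<le> s" using assms by (auto simp: s_def)
  have "\<bar>Re (\<i> * w * cnj z)\<bar> \<le> cmod w * s"
    using abs_Re_le_cmod[of "\<i> * w * cnj z"] by (simp add: norm_mult s_def)
  have "1 - a / s\<^sup>2 = (s\<^sup>2 - a) / s\<^sup>2" using s by (simp add: field_simps)
  then have "\<bar>Re (\<i> * w * cnj z) * (1 - a / s\<^sup>2)\<bar> = \<bar>Re (\<i> * w * cnj z)\<bar> * \<bar>s\<^sup>2 - a\<bar> / s\<^sup>2"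
    by (simp add: abs_mult)
  also have "\<dots> \<le> cmod w * s * \<bar>s\<^sup>2 - a\<bar> / s\<^sup>2"
    using \<open>\<bar>Re (\<i> * w * cnj z)\<bar> \<le> cmod w * s\<close> by (intro divide_right_mono mult_right_mono) auto
  also have "\<dots> = cmod w * \<bar>s\<^sup>2 - a\<bar> / s" using s by (simp add: power2_eq_square)
  also have "\<dots> \<le> cmod w * \<bar>s\<^sup>2 - a\<bar> / \<mu>" using s \<open>\<mu> > 0\<close> by (intro divide_left_mono) auto
  also have "\<dots> \<le> ((cmod w)\<^sup>2 + (s\<^sup>2 - a)\<^sup>2) / \<mu>"
  proof (intro divide_right_mono)
    have "2 * (cmod w * \<bar>s\<^sup>2 - a\<bar>) \<le> (cmod w)\<^sup>2 + (s\<^sup>2 - a)\<^sup>2"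
      using sum_squares_bound[of "cmod w" "\<bar>s\<^sup>2 - a\<bar>"] by (simp add: power2_abs mult.assoc)
    moreover have "cmod w * \<bar>s\<^sup>2 - a\<bar> \<ge> 0" by simp
    ultimately show "cmod w * \<bar>s\<^sup>2 - a\<bar> \<le> (cmod w)\<^sup>2 + (s\<^sup>2 - a)\<^sup>2" by linarith
  qed (use \<open>\<mu> > 0\<close> in simp)
  finally show ?thesis by (simp add: s_def)
qed

section \<open>Integrated estimates\<close>

lemma integrable_and_integral_ge_if_AE_between:
  fixes e q :: "'a \<Rightarrow> real"
  assumes [measurable]: "e \<in> borel_measurable M" and q: "integrable M q"
    and between: "AE x in M. c * q x \<le> e x \<and> e x \<le> C * q x"
  shows "integrable M e" "c * integral\<^sup>L M q \<le> integral\<^sup>L M e"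
proof -
  show "integrable M e"
  proof (rule Bochner_Integration.integrable_bound[of _ "\<lambda>x. (\<bar>c\<bar> + \<bar>C\<bar>) * \<bar>q x\<bar>"])
    show "integrable M (\<lambda>x. (\<bar>c\<bar> + \<bar>C\<bar>) * \<bar>q x\<bar>)" using q by auto
    show "AE x in M. norm (e x) \<le> norm ((\<bar>c\<bar> + \<bar>C\<bar>) * \<bar>q x\<bar>)"
      using between
    proof eventually_elim
      case (elim x)
      then have "\<bar>e x\<bar> \<le> \<bar>c * q x\<bar> + \<bar>C * q x\<bar>" by linarith
      then show ?case by (simp add: abs_mult distrib_right)
    qed
  qed simp
  then show "c * integral\<^sup>L M q \<le> integral\<^sup>L M e"
    using integral_mono_AE[of M "\<lambda>x. c * q x" e] q between by auto
qed

definition gl_density :: "real \<Rightarrow> (real \<Rightarrow> complex) \<Rightarrow> real \<Rightarrow> real" where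
  "gl_density r0 u x = (cmod (wderiv u x))\<^sup>2 + ((cmod (u x))\<^sup>2 - r0\<^sup>2)\<^sup>2"

lemma X_space_has_weak_deriv: "u \<in> X_space r0 \<Longrightarrow> has_weak_deriv u (wderiv u)"
  unfolding X_space_def using has_weak_deriv_wderiv by blast

lemma integrable_gl_density: "u \<in> X_space r0 \<Longrightarrow> integrable lborel (gl_density r0 u)"
  unfolding X_space_def gl_density_def by auto

lemma AE_energy_density_eq:
  assumes u: "u \<in> X_space r0"
    and dh: "\<And>s. s \<ge> 0 \<Longrightarrow> (h has_real_derivative h' s) (at s within {0..})" and ch: "continuous_on {0..} h'"
  shows "AE x in lborel. energy_density f h \<kappa> r0 u x = (cmod (wderiv u x))\<^sup>2 + Fpot f r0 ((cmod (u x))\<^sup>2)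
    + \<kappa> / 2 * (h' ((cmod (u x))\<^sup>2) * (2 * Re (wderiv u x * cnj (u x))))\<^sup>2"
proof -
  have "has_weak_deriv (\<lambda>x. h ((cmod (u x))\<^sup>2)) (\<lambda>x. h' ((cmod (u x))\<^sup>2) * (2 * Re (wderiv u x * cnj (u x))))"
    using X_space_has_weak_deriv[OF u] dh ch by (rule has_weak_deriv_comp_norm_sq)
  then have "AE x in lborel. wderiv (\<lambda>x. h ((cmod (u x))\<^sup>2)) x
      = h' ((cmod (u x))\<^sup>2) * (2 * Re (wderiv u x * cnj (u x)))"
    by (rule AE_wderiv_eq)
  then show ?thesis by eventually_elim (simp add: energy_density_def)
qed

lemma borel_measurable_energy_density:
  assumes u: "u \<in> X_space r0"
    and dh: "\<And>s. s \<ge> 0 \<Longrightarrow> (h has_real_derivative h' s) (at s within {0..})" and ch: "continuous_on {0..} h'"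
    and cF: "continuous_on {0..} (Fpot f r0)"
  shows "energy_density f h \<kappa> r0 u \<in> borel_measurable lborel"
proof -
  have wd: "has_weak_deriv u (wderiv u)" by (rule X_space_has_weak_deriv[OF u])
  have "continuous_on UNIV (\<lambda>x. (cmod (u x))\<^sup>2)"
    by (rule has_weak_deriv_continuous[OF has_weak_deriv_norm_sq[OF wd]])
  then have "continuous_on UNIV (\<lambda>x. Fpot f r0 ((cmod (u x))\<^sup>2))"
    by (rule continuous_on_compose2[OF cF]) auto
  then have [measurable]: "(\<lambda>x. Fpot f r0 ((cmod (u x))\<^sup>2)) \<in> borel_measurable borel"
    by (rule borel_measurable_continuous_onI)
  have "has_weak_deriv (\<lambda>x. h ((cmod (u x))\<^sup>2)) (\<lambda>x. h' ((cmod (u x))\<^sup>2) * (2 * Re (wderiv u x * cnj (u x))))"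
    using wd dh ch by (rule has_weak_deriv_comp_norm_sq)
  then have [measurable]: "wderiv u \<in> borel_measurable borel" "wderiv (\<lambda>x. h ((cmod (u x))\<^sup>2)) \<in> borel_measurable borel"
    using borel_measurable_wderiv wd by auto
  show ?thesis unfolding energy_density_def[abs_def] by measurable
qed

lemma AE_energy_density_comparable:
  assumes u: "u \<in> X_space r0" and bounded: "\<And>x. (cmod (u x))\<^sup>2 \<le> M"
    and dh: "\<And>s. s \<ge> 0 \<Longrightarrow> (h has_real_derivative h' s) (at s within {0..})" and ch: "continuous_on {0..} h'"
    and low: "\<And>\<sigma> W r. \<sigma> \<in> {0..M} \<Longrightarrow> W \<ge> 0 \<Longrightarrow> r\<^sup>2 \<le> 4 * \<sigma> * W \<Longrightarrow>
      c * (W + (\<sigma> - r0\<^sup>2)\<^sup>2) \<le> W + Fpot f r0 \<sigma> + \<kappa> / 2 * (h' \<sigma> * r)\<^sup>2"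
    and up: "\<And>\<sigma> W r. \<sigma> \<in> {0..M} \<Longrightarrow> W \<ge> 0 \<Longrightarrow> r\<^sup>2 \<le> 4 * \<sigma> * W \<Longrightarrow>
      W + Fpot f r0 \<sigma> + \<kappa> / 2 * (h' \<sigma> * r)\<^sup>2 \<le> C * (W + (\<sigma> - r0\<^sup>2)\<^sup>2)"
  shows "AE x in lborel. c * gl_density r0 u x \<le> energy_density f h \<kappa> r0 u x
    \<and> energy_density f h \<kappa> r0 u x \<le> C * gl_density r0 u x"
proof -
  have "AE x in lborel. energy_density f h \<kappa> r0 u x = (cmod (wderiv u x))\<^sup>2 + Fpot f r0 ((cmod (u x))\<^sup>2)
    + \<kappa> / 2 * (h' ((cmod (u x))\<^sup>2) * (2 * Re (wderiv u x * cnj (u x))))\<^sup>2"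
    using u dh ch by (rule AE_energy_density_eq)
  then show ?thesis
  proof eventually_elim
    case (elim x)
    have "(cmod (u x))\<^sup>2 \<in> {0..M}" using bounded[of x] by simp
    then show ?case
      using low up Re_mult_cnj_sq_le[of "wderiv u x" "u x"] by (simp add: elim gl_density_def)
  qed
qed

lemma H1_norm_sq_le_integral_gl_density:
  assumes u: "u \<in> X_space r0" and bounded: "\<And>x. (cmod (u x))\<^sup>2 \<le> M"
  shows "H1_norm_sq (\<lambda>x. (cmod (u x))\<^sup>2 - r0\<^sup>2) \<le> max 1 (4 * M) * integral\<^sup>L lborel (gl_density r0 u)"
proof -
  define \<rho>' where "\<rho>' x = 2 * Re (wderiv u x * cnj (u x))" for x
  let ?W = "\<integral>x. (cmod (wderiv u x))\<^sup>2 \<partial>lborel" and ?R = "\<integral>x. ((cmod (u x))\<^sup>2 - r0\<^sup>2)\<^sup>2 \<partial>lborel"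
  have int_w: "integrable lborel (\<lambda>x. (cmod (wderiv u x))\<^sup>2)"
    and int_\<rho>: "integrable lborel (\<lambda>x. ((cmod (u x))\<^sup>2 - r0\<^sup>2)\<^sup>2)"
    using u unfolding X_space_def by auto
  have wd: "has_weak_deriv (\<lambda>x. (cmod (u x))\<^sup>2 - r0\<^sup>2) \<rho>'"
    unfolding \<rho>'_def[abs_def]
    by (intro has_weak_deriv_diff_const has_weak_deriv_norm_sq X_space_has_weak_deriv[OF u])
  have [measurable]: "\<rho>' \<in> borel_measurable borel"
    using locally_integrable_borel_measurable[OF has_weak_deriv_locally_integrable[OF wd]] by simp
  have \<rho>'_le: "(\<rho>' x)\<^sup>2 \<le> 4 * M * (cmod (wderiv u x))\<^sup>2" for x
    using Re_mult_cnj_sq_le[of "wderiv u x" "u x"] mult_right_mono[OF bounded[of x], of "(cmod (wderiv u x))\<^sup>2"]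
    by (simp add: \<rho>'_def)
  have "integrable lborel (\<lambda>x. (\<rho>' x)\<^sup>2)"
    by (rule Bochner_Integration.integrable_bound[of _ "\<lambda>x. 4 * M * (cmod (wderiv u x))\<^sup>2"])
      (use int_w \<rho>'_le in \<open>auto intro!: AE_I2 order_trans[OF _ abs_ge_self]\<close>)
  then have "(\<integral>x. (\<rho>' x)\<^sup>2 \<partial>lborel) \<le> (\<integral>x. 4 * M * (cmod (wderiv u x))\<^sup>2 \<partial>lborel)"
    using int_w \<rho>'_le by (intro integral_mono) auto
  moreover have "(\<integral>x. (wderiv (\<lambda>x. (cmod (u x))\<^sup>2 - r0\<^sup>2) x)\<^sup>2 \<partial>lborel) = (\<integral>x. (\<rho>' x)\<^sup>2 \<partial>lborel)"
    using AE_wderiv_eq[OF wd] borel_measurable_wderiv[OF wd] by (intro integral_cong_AE) auto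
  ultimately have "H1_norm_sq (\<lambda>x. (cmod (u x))\<^sup>2 - r0\<^sup>2) \<le> ?R + 4 * M * ?W"
    unfolding H1_norm_sq_def by simp
  also have "\<dots> \<le> max 1 (4 * M) * ?R + max 1 (4 * M) * ?W"
    using mult_right_mono[of 1 "max 1 (4 * M)" ?R] mult_right_mono[of "4 * M" "max 1 (4 * M)" ?W]
    by (simp add: integral_nonneg_AE)
  also have "\<dots> = max 1 (4 * M) * integral\<^sup>L lborel (gl_density r0 u)"
    unfolding gl_density_def using int_w int_\<rho> by (simp add: algebra_simps)
  finally show ?thesis .
qed

lemma abs_momentum_le_integral_gl_density:
  assumes u: "u \<in> X_space r0" and "\<mu> > 0" and \<mu>_le: "\<And>x. \<mu> \<le> cmod (u x)"
  shows "\<bar>momentum r0 u\<bar> \<le> 1 / \<mu> * integral\<^sup>L lborel (gl_density r0 u)"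
proof -
  define p where "p x = Re (\<i> * wderiv u x * cnj (u x)) * (1 - r0\<^sup>2 / (cmod (u x))\<^sup>2)" for x
  have wd: "has_weak_deriv u (wderiv u)" by (rule X_space_has_weak_deriv[OF u])
  have cu: "continuous_on UNIV u" by (rule has_weak_deriv_continuous[OF wd])
  have [measurable]: "(\<lambda>x. cnj (u x)) \<in> borel_measurable borel" "(\<lambda>x. (cmod (u x))\<^sup>2) \<in> borel_measurable borel"
    by (intro borel_measurable_continuous_onI continuous_intros cu)+
  have [measurable]: "wderiv u \<in> borel_measurable borel" by (rule borel_measurable_wderiv[OF wd])
  have [measurable]: "p \<in> borel_measurable borel" unfolding p_def[abs_def] by measurable
  have p_le: "\<bar>p x\<bar> \<le> 1 / \<mu> * gl_density r0 u x" for x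
    unfolding p_def gl_density_def using momentum_integrand_bound[OF \<open>\<mu> > 0\<close> \<mu>_le[of x]] by simp
  have int_gl: "integrable lborel (\<lambda>x. 1 / \<mu> * gl_density r0 u x)" using integrable_gl_density[OF u] by simp
  have "integrable lborel p"
    by (rule Bochner_Integration.integrable_bound[OF int_gl])
      (use p_le \<open>\<mu> > 0\<close> in \<open>auto simp: gl_density_def\<close>)
  then have "(\<integral>x. \<bar>p x\<bar> \<partial>lborel) \<le> (\<integral>x. 1 / \<mu> * gl_density r0 u x \<partial>lborel)"
    using p_le int_gl by (intro integral_mono) auto
  then have "\<bar>integral\<^sup>L lborel p\<bar> \<le> (\<integral>x. 1 / \<mu> * gl_density r0 u x \<partial>lborel)"
    using integral_abs_bound[of lborel p] by linarith
  moreover have "momentum r0 u = integral\<^sup>L lborel p" unfolding momentum_def p_def by (rule refl)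
  ultimately show ?thesis by simp
qed

lemma energy_estimates_if_comparable:
  assumes u: "u \<in> X_space r0" and bounded: "\<And>x. (cmod (u x))\<^sup>2 \<le> M" and "c > 0"
    and e_measurable: "energy_density f h \<kappa> r0 u \<in> borel_measurable lborel"
    and between: "AE x in lborel. c * gl_density r0 u x \<le> energy_density f h \<kappa> r0 u x
      \<and> energy_density f h \<kappa> r0 u x \<le> K * gl_density r0 u x"
    and C_def: "C = max 1 (4 * M) / c"
  shows "(AE x in lborel. energy_density f h \<kappa> r0 u x
           \<ge> (1 / C) * ((cmod (wderiv u x))\<^sup>2 + ((cmod (u x))\<^sup>2 - r0\<^sup>2)\<^sup>2))
    \<and> H1_norm_sq (\<lambda>x. (cmod (u x))\<^sup>2 - r0\<^sup>2) \<le> C * E_kappa f h \<kappa> r0 u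
    \<and> ((INF x. cmod (u x)) > 0 \<longrightarrow>
         \<bar>momentum r0 u\<bar> \<le> C / (INF x. cmod (u x)) * E_kappa f h \<kappa> r0 u)"
proof (intro conjI impI)
  let ?G = "integral\<^sup>L lborel (gl_density r0 u)" and ?E = "E_kappa f h \<kappa> r0 u"
  have E_ge: "c * ?G \<le> ?E"
    using integrable_and_integral_ge_if_AE_between(2)[OF e_measurable integrable_gl_density[OF u] between]
    by (simp add: E_kappa_def)
  have "?G \<ge> 0" by (simp add: integral_nonneg_AE gl_density_def)
  have C: "C > 0" "1 / C \<le> c" "1 \<le> C * c"
    using \<open>c > 0\<close> by (auto simp: C_def field_simps divide_right_mono)
  show "AE x in lborel. energy_density f h \<kappa> r0 u x
      \<ge> (1 / C) * ((cmod (wderiv u x))\<^sup>2 + ((cmod (u x))\<^sup>2 - r0\<^sup>2)\<^sup>2)"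
    using between
  proof eventually_elim
    case (elim x)
    have "(1 / C) * gl_density r0 u x \<le> c * gl_density r0 u x"
      using C by (intro mult_right_mono) (auto simp: gl_density_def)
    then show ?case using elim by (simp add: gl_density_def)
  qed
  have "H1_norm_sq (\<lambda>x. (cmod (u x))\<^sup>2 - r0\<^sup>2) \<le> C * (c * ?G)"
    using H1_norm_sq_le_integral_gl_density[OF u bounded] \<open>c > 0\<close> by (simp add: C_def)
  also have "\<dots> \<le> C * ?E" using E_ge C by (intro mult_left_mono) auto
  finally show "H1_norm_sq (\<lambda>x. (cmod (u x))\<^sup>2 - r0\<^sup>2) \<le> C * ?E" .
  assume \<mu>: "(INF x. cmod (u x)) > 0"
  have "(INF x. cmod (u x)) \<le> cmod (u x)" for x by (rule cINF_lower) (auto intro: bdd_belowI[of _ 0])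
  then have "\<bar>momentum r0 u\<bar> \<le> 1 / (INF x. cmod (u x)) * ?G"
    using abs_momentum_le_integral_gl_density[OF u \<mu>] by blast
  also have "\<dots> \<le> 1 / (INF x. cmod (u x)) * (C * ?E)"
  proof (rule mult_left_mono)
    have "?G \<le> (C * c) * ?G" using mult_right_mono[OF C(3) \<open>?G \<ge> 0\<close>] by simp
    also have "\<dots> \<le> C * ?E" using E_ge C(1) by (simp add: mult.assoc)
    finally show "?G \<le> C * ?E" .
  qed (use \<mu> in simp)
  finally show "\<bar>momentum r0 u\<bar> \<le> C / (INF x. cmod (u x)) * ?E" by simp
qed

theorem lemma3p1:
  fixes f h :: "real \<Rightarrow> real" and r0 \<kappa> \<xi> :: real
  assumes r0: "r0 > 0"
    and H1: "smooth_on_nonneg f" "smooth_on_nonneg h"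
    and f_r0: "f (r0\<^sup>2) = 0"
    and H2: "\<forall>\<sigma>\<in>{0..r0\<^sup>2}. 1 + 2 * \<kappa> * \<sigma> * (deriv h \<sigma>)\<^sup>2 > 0"
    and H3: "\<forall>\<sigma>\<in>{0..<r0\<^sup>2}. Fpot f r0 \<sigma> > 0" "deriv (deriv (Fpot f r0)) (r0\<^sup>2) > 0"
    and kappa: "ereal \<kappa> > kappa_tilde h r0"
    and xi: "\<xi> > 0"
    and xi_F: "\<forall>\<sigma>\<in>{r0\<^sup>2<..r0\<^sup>2 + \<xi>}. Fpot f r0 \<sigma> > 0"
    and xi_h: "\<forall>\<sigma>\<in>{r0\<^sup>2<..r0\<^sup>2 + \<xi>}. 1 + 2 * \<kappa> * \<sigma> * (deriv h \<sigma>)\<^sup>2 > 0"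
  shows "\<exists>C>0. \<forall>u \<in> X_space r0. (\<forall>x. (cmod (u x))\<^sup>2 \<le> r0\<^sup>2 + \<xi>) \<longrightarrow>
           (AE x in lborel. energy_density f h \<kappa> r0 u x
               \<ge> (1 / C) * ((cmod (wderiv u x))\<^sup>2 + ((cmod (u x))\<^sup>2 - r0\<^sup>2)\<^sup>2))
         \<and> H1_norm_sq (\<lambda>x. (cmod (u x))\<^sup>2 - r0\<^sup>2) \<le> C * E_kappa f h \<kappa> r0 u
         \<and> ((INF x. cmod (u x)) > 0 \<longrightarrow>
              \<bar>momentum r0 u\<bar> \<le> C / (INF x. cmod (u x)) * E_kappa f h \<kappa> r0 u)"
proof -
  obtain f' where df: "\<And>x. x \<ge> 0 \<Longrightarrow> (f has_real_derivative f' x) (at x within {0..})"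
    using smooth_on_nonneg_derivative[OF H1(1)] by blast
  obtain h' where dh: "\<And>x. x \<ge> 0 \<Longrightarrow> (h has_real_derivative h' x) (at x within {0..})"
    and ch: "continuous_on {0..} h'"
    using smooth_on_nonneg_derivative[OF H1(2)] by blast
  obtain c K where "c > 0" and comparable:
    "\<And>\<sigma> W r. \<sigma> \<in> {0..r0\<^sup>2 + \<xi>} \<Longrightarrow> W \<ge> 0 \<Longrightarrow> r\<^sup>2 \<le> 4 * \<sigma> * W \<Longrightarrow>
      c * (W + (\<sigma> - r0\<^sup>2)\<^sup>2) \<le> W + Fpot f r0 \<sigma> + \<kappa> / 2 * (h' \<sigma> * r)\<^sup>2"
    "\<And>\<sigma> W r. \<sigma> \<in> {0..r0\<^sup>2 + \<xi>} \<Longrightarrow> W \<ge> 0 \<Longrightarrow> r\<^sup>2 \<le> 4 * \<sigma> * W \<Longrightarrow>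
      W + Fpot f r0 \<sigma> + \<kappa> / 2 * (h' \<sigma> * r)\<^sup>2 \<le> K * (W + (\<sigma> - r0\<^sup>2)\<^sup>2)"
    using energy_integrand_comparable_on_range[OF r0 xi df dh ch f_r0 H2 H3 xi_F xi_h] by blast
  have cF: "continuous_on {0..} (Fpot f r0)"
    using continuous_on_Fpot DERIV_continuous_on[of "{0..}" f f'] df by auto
  have "energy_density f h \<kappa> r0 u \<in> borel_measurable lborel" if "u \<in> X_space r0" for u
    using that dh ch cF by (rule borel_measurable_energy_density)
  moreover have "AE x in lborel. c * gl_density r0 u x \<le> energy_density f h \<kappa> r0 u x
      \<and> energy_density f h \<kappa> r0 u x \<le> K * gl_density r0 u x"
    if "u \<in> X_space r0" "\<And>x. (cmod (u x))\<^sup>2 \<le> r0\<^sup>2 + \<xi>" for u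
    using that dh ch comparable by (rule AE_energy_density_comparable)
  ultimately show ?thesis
    using energy_estimates_if_comparable[where M = "r0\<^sup>2 + \<xi>" and c = c and K = K] \<open>c > 0\<close>
    by (intro exI[of _ "max 1 (4 * (r0\<^sup>2 + \<xi>)) / c"] conjI[OF _ ballI] impI) auto
qed

end
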